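(* Let $p\in(0,1)$ and let $(\lambda_n)_{n\ge1}$ be a sequence with $\lambda_1=1$ and $0\le\lambda_n\le\lambda_{n-1}$ for all $n>1$. Let $r_1,r_2,\dots$ be $\{0,1\}$-valued random variables with $\Pr(r_1=1)=p$ and, for every $n\ge2$, $\Pr(r_n=1\mid r_1,\dots,r_{n-1})=\lambda_n p+(1-\lambda_n)\bar p_{n-1}$, where $\bar p_m=\frac1m\sum_{i=1}^m r_i$. Then \[\lim_{n\to\infty}\mathbb{E}\big[(\bar p_n-p)^2\big]=\lim_{n\to\infty}p(1-p)\sum_{i=1}^{n-1}\frac{1}{i(i+1)}\prod_{j=i+1}^{n-1}\Big(1-\frac{2\lambda_j}{j+1}\Big).\] *)

theory Defs
  imports "HOL-Probability.Probability"
begin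

definition pbar :: "(nat \<Rightarrow> 'a \<Rightarrow> real) \<Rightarrow> nat \<Rightarrow> 'a \<Rightarrow> real" where
  "pbar r m \<omega> = (\<Sum>i=1..m. r i \<omega>) / real m"

end

theory Submission
  imports Defs
begin

text \<open>Write e n for the mean squared error of pbar n. Conditioning on the first n - 1 outcomes
  (a finite partition into cylinders) gives E[g(pbar (n-1)) (r n - p)] =
  (1 - lam n) E[g(pbar (n-1)) (pbar (n-1) - p)] for every g. With g = 1 this shows E[r n] = p; with
  g(x) = x - p, expanding n (pbar n - p) = (n-1)(pbar (n-1) - p) + (r n - p) yields the recursion
  n^2 e n = ((n-1)^2 + 2 (n-1) (1 - lam n)) e (n-1) + p (1 - p), whose solution is
  e n = (n+1)/n p (1 - p) S (n+1) with S n the sum in the statement. Since the weights 1/(i(i+1))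
  beyond index n sum to 1/n and the factors lie in [0,1], S n + 1/n is decreasing, so S converges.\<close>

definition discounted_sum :: "(nat \<Rightarrow> real) \<Rightarrow> nat \<Rightarrow> real" where
  "discounted_sum c n = (\<Sum>i=1..n-1. 1 / (real i * real (i + 1)) * (\<Prod>j=i+1..n-1. c j))"

lemma discounted_sum_Suc:
  assumes "n \<ge> 1"
  shows "discounted_sum c (Suc n) = c n * discounted_sum c n + 1 / (real n * real (Suc n))"
proof -
  obtain k where n: "n = Suc k" using assms by (cases n) auto
  have "(\<Sum>i=1..k. 1 / (real i * real (i + 1)) * (\<Prod>j=i+1..Suc k. c j))
      = (\<Sum>i=1..k. c (Suc k) * (1 / (real i * real (i + 1)) * (\<Prod>j=i+1..k. c j)))"
    by (intro sum.cong refl) simp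
  then show ?thesis
    unfolding discounted_sum_def n by (simp add: sum_distrib_left)
qed

lemma discounted_sum_nonneg:
  assumes "\<And>j. j \<ge> 1 \<Longrightarrow> 0 \<le> c j"
  shows "0 \<le> discounted_sum c n"
  unfolding discounted_sum_def using assms by (intro sum_nonneg mult_nonneg_nonneg prod_nonneg) auto

lemma convergent_discounted_sum:
  assumes c: "\<And>j. j \<ge> 1 \<Longrightarrow> 0 \<le> c j \<and> c j \<le> 1"
  shows "convergent (discounted_sum c)"
proof -
  define u where "u n = discounted_sum c (Suc n) + 1 / real (Suc n)" for n
  have S_nonneg: "0 \<le> discounted_sum c n" for n
    using c by (intro discounted_sum_nonneg) auto
  have "decseq u"
  proof (rule decseq_SucI)
    fix n
    have "1 / (real (Suc n) * real (Suc (Suc n))) + 1 / real (Suc (Suc n)) = 1 / real (Suc n)"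
      by (simp add: divide_simps)
    then have "u (Suc n) = c (Suc n) * discounted_sum c (Suc n) + 1 / real (Suc n)"
      unfolding u_def by (simp add: discounted_sum_Suc)
    also have "\<dots> \<le> u n"
      unfolding u_def using c[of "Suc n"] S_nonneg[of "Suc n"]
      by (simp add: mult_left_le_one_le)
    finally show "u (Suc n) \<le> u n" .
  qed
  moreover have "0 \<le> u n" for n
    unfolding u_def using S_nonneg[of "Suc n"] by simp
  ultimately obtain L where "u \<longlonglongrightarrow> L"
    using decseq_convergent by blast
  then have "(\<lambda>n. u n - 1 / real (Suc n)) \<longlonglongrightarrow> L - 0"
    by (intro tendsto_diff LIMSEQ_Suc[OF lim_1_over_n])
  then have "convergent (\<lambda>n. discounted_sum c (Suc n))"
    unfolding u_def by (auto simp: convergent_def)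
  then show ?thesis
    by (simp add: convergent_Suc_iff)
qed

lemma pbar_Suc: "pbar r (Suc m) \<omega> = (real m * pbar r m \<omega> + r (Suc m) \<omega>) / real (Suc m)"
  unfolding pbar_def by simp

definition average :: "nat \<Rightarrow> (nat \<Rightarrow> real) \<Rightarrow> real" where
  "average m a = (\<Sum>i=1..m. a i) / real m"

locale reinforced_bernoulli = prob_space M for M :: "'a measure" +
  fixes r :: "nat \<Rightarrow> 'a \<Rightarrow> real" and lam :: "nat \<Rightarrow> real" and p :: real
  assumes r_measurable: "\<And>n. n \<ge> 1 \<Longrightarrow> r n \<in> borel_measurable M"
    and r_01: "\<And>n \<omega>. n \<ge> 1 \<Longrightarrow> \<omega> \<in> space M \<Longrightarrow> r n \<omega> \<in> {0, 1}"
    and prob_r1: "measure M {\<omega> \<in> space M. r 1 \<omega> = 1} = p"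
    and prob_step: "\<And>n a. n \<ge> 2 \<Longrightarrow> (\<forall>i\<in>{1..n-1}. a i \<in> {0, 1}) \<Longrightarrow>
           measure M {\<omega> \<in> space M. (\<forall>i\<in>{1..n-1}. r i \<omega> = a i) \<and> r n \<omega> = 1}
           = (lam n * p + (1 - lam n) * ((\<Sum>i=1..n-1. a i) / real (n - 1)))
             * measure M {\<omega> \<in> space M. \<forall>i\<in>{1..n-1}. r i \<omega> = a i}"
begin

lemma p_nonneg: "0 \<le> p" and p_le_1: "p \<le> 1"
  using prob_r1 measure_nonneg prob_le_1 by auto

lemma pbar_nonneg_le_1:
  assumes "\<omega> \<in> space M"
  shows "0 \<le> pbar r m \<omega> \<and> pbar r m \<omega> \<le> 1"
proof -
  have "0 \<le> (\<Sum>i=1..m. r i \<omega>)"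
    using r_01[OF _ assms] by (intro sum_nonneg) force
  moreover have "(\<Sum>i=1..m. r i \<omega>) \<le> (\<Sum>i=1..m. 1)"
    using r_01[OF _ assms] by (intro sum_mono) force
  ultimately show ?thesis
    unfolding pbar_def by (auto simp: divide_simps)
qed

lemma pbar_measurable [measurable]: "pbar r m \<in> borel_measurable M"
  unfolding pbar_def[abs_def] using r_measurable by measurable

lemma integrable_bounded:
  fixes f :: "'a \<Rightarrow> real"
  assumes "f \<in> borel_measurable M" and "\<And>\<omega>. \<omega> \<in> space M \<Longrightarrow> \<bar>f \<omega>\<bar> \<le> B"
  shows "integrable M f"
  using assms by (intro integrable_const_bound[where B = B] AE_I2) auto

lemma sets_r_eq: "n \<ge> 1 \<Longrightarrow> {\<omega> \<in> space M. r n \<omega> = x} \<in> sets M"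
  using r_measurable by measurable

definition history :: "nat \<Rightarrow> 'a \<Rightarrow> nat \<Rightarrow> real" where
  "history m \<omega> = restrict (\<lambda>i. r i \<omega>) {1..m}"

definition cylinder :: "nat \<Rightarrow> (nat \<Rightarrow> real) \<Rightarrow> 'a set" where
  "cylinder m a = {\<omega> \<in> space M. \<forall>i\<in>{1..m}. r i \<omega> = a i}"

lemma sets_cylinder: "cylinder m a \<in> sets M"
  unfolding cylinder_def by (intro sets.sets_Collect_finite_All sets_r_eq) auto

lemma pbar_eq_average_history: "pbar r m \<omega> = average m (history m \<omega>)"
  unfolding pbar_def average_def history_def by simp

lemma sum_indicator_cylinder:
  fixes h :: "(nat \<Rightarrow> real) \<Rightarrow> real"
  assumes "\<omega> \<in> space M"
  shows "(\<Sum>a\<in>PiE {1..m} (\<lambda>_. {0,1}). h a * indicator (cylinder m a) \<omega>) = h (history m \<omega>)"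
proof -
  have "history m \<omega> \<in> PiE {1..m} (\<lambda>_. {0,1})"
    using r_01[OF _ assms] by (auto simp: history_def)
  moreover have "\<omega> \<in> cylinder m a \<longleftrightarrow> a = history m \<omega>" if "a \<in> PiE {1..m} (\<lambda>_. {0,1})" for a
    using that assms by (auto simp: cylinder_def history_def PiE_iff extensional_def fun_eq_iff)
  then have "(\<Sum>a\<in>PiE {1..m} (\<lambda>_. {0,1}). h a * indicator (cylinder m a) \<omega>)
      = (\<Sum>a\<in>PiE {1..m} (\<lambda>_. {0,1}). if a = history m \<omega> then h a else 0)"
    by (intro sum.cong) (auto simp: indicator_def)
  ultimately show ?thesis
    by (simp add: finite_PiE)
qed

lemma has_bochner_integral_history:
  fixes h :: "(nat \<Rightarrow> real) \<Rightarrow> real"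
  assumes "B \<in> sets M"
  shows "has_bochner_integral M (\<lambda>\<omega>. h (history m \<omega>) * indicator B \<omega>)
           (\<Sum>a\<in>PiE {1..m} (\<lambda>_. {0,1}). h a * measure M (cylinder m a \<inter> B))"
proof -
  have "has_bochner_integral M (\<lambda>\<omega>. \<Sum>a\<in>PiE {1..m} (\<lambda>_. {0,1}). h a * indicator (cylinder m a \<inter> B) \<omega>)
          (\<Sum>a\<in>PiE {1..m} (\<lambda>_. {0,1}). h a * measure M (cylinder m a \<inter> B))"
    using assms sets_cylinder
    by (intro has_bochner_integral_sum has_bochner_integral_mult_right has_bochner_integral_real_indicator)
       (auto simp: emeasure_eq_measure)
  moreover have "(\<Sum>a\<in>PiE {1..m} (\<lambda>_. {0,1}). h a * indicator (cylinder m a \<inter> B) \<omega>)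
      = h (history m \<omega>) * indicator B \<omega>" if "\<omega> \<in> space M" for \<omega>
    using sum_indicator_cylinder[OF that, of "\<lambda>a. h a * indicator B \<omega>"]
    by (simp add: indicator_inter_arith mult_ac)
  ultimately show ?thesis
    by (simp cong: has_bochner_integral_cong)
qed

lemma measure_cylinder_step:
  assumes "m \<ge> 1" and "a \<in> PiE {1..m} (\<lambda>_. {0,1})"
  shows "measure M (cylinder m a \<inter> {\<omega> \<in> space M. r (Suc m) \<omega> = 1})
       = (lam (Suc m) * p + (1 - lam (Suc m)) * average m a) * measure M (cylinder m a)"
proof -
  have "cylinder m a \<inter> {\<omega> \<in> space M. r (Suc m) \<omega> = 1}
      = {\<omega> \<in> space M. (\<forall>i\<in>{1..Suc m - 1}. r i \<omega> = a i) \<and> r (Suc m) \<omega> = 1}"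
    by (auto simp: cylinder_def)
  then show ?thesis
    using prob_step[of "Suc m" a] assms by (auto simp: cylinder_def average_def)
qed

lemma integral_mult_centered_step:
  fixes g :: "real \<Rightarrow> real"
  assumes m: "m \<ge> 1"
  shows "(\<integral>\<omega>. g (pbar r m \<omega>) * (r (Suc m) \<omega> - p) \<partial>M)
       = (1 - lam (Suc m)) * (\<integral>\<omega>. g (pbar r m \<omega>) * (pbar r m \<omega> - p) \<partial>M)"
proof -
  let ?A = "PiE {1..m} (\<lambda>_. {0::real, 1})"
  define R where "R = {\<omega> \<in> space M. r (Suc m) \<omega> = 1}"
  define h where "h a = g (average m a)" for a
  have cylinder_space: "cylinder m a \<inter> space M = cylinder m a" for a
    by (auto simp: cylinder_def)
  have "has_bochner_integral M
          (\<lambda>\<omega>. h (history m \<omega>) * indicator R \<omega> - p * h (history m \<omega>) * indicator (space M) \<omega>)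
          ((\<Sum>a\<in>?A. h a * measure M (cylinder m a \<inter> R))
             - (\<Sum>a\<in>?A. p * h a * measure M (cylinder m a \<inter> space M)))"
    unfolding R_def by (intro has_bochner_integral_diff has_bochner_integral_history sets_r_eq) auto
  moreover have "h (history m \<omega>) * indicator R \<omega> - p * h (history m \<omega>) * indicator (space M) \<omega>
      = g (pbar r m \<omega>) * (r (Suc m) \<omega> - p)" if "\<omega> \<in> space M" for \<omega>
    using r_01[of "Suc m" \<omega>] that
    by (auto simp: R_def h_def pbar_eq_average_history indicator_def algebra_simps)
  moreover have "(\<Sum>a\<in>?A. h a * measure M (cylinder m a \<inter> R))
             - (\<Sum>a\<in>?A. p * h a * measure M (cylinder m a \<inter> space M))
      = (1 - lam (Suc m)) * (\<Sum>a\<in>?A. h a * (average m a - p) * measure M (cylinder m a))"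
    unfolding R_def cylinder_space sum_distrib_left sum_subtractf[symmetric]
    by (intro sum.cong refl) (simp add: measure_cylinder_step[OF m] algebra_simps)
  ultimately have lhs: "has_bochner_integral M (\<lambda>\<omega>. g (pbar r m \<omega>) * (r (Suc m) \<omega> - p))
      ((1 - lam (Suc m)) * (\<Sum>a\<in>?A. h a * (average m a - p) * measure M (cylinder m a)))"
    by (simp cong: has_bochner_integral_cong)
  have "has_bochner_integral M (\<lambda>\<omega>. h (history m \<omega>) * (average m (history m \<omega>) - p) * indicator (space M) \<omega>)
          (\<Sum>a\<in>?A. h a * (average m a - p) * measure M (cylinder m a \<inter> space M))"
    by (intro has_bochner_integral_history) simp
  then have rhs: "has_bochner_integral M (\<lambda>\<omega>. g (pbar r m \<omega>) * (pbar r m \<omega> - p))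
      (\<Sum>a\<in>?A. h a * (average m a - p) * measure M (cylinder m a))"
    by (simp add: cylinder_space h_def pbar_eq_average_history cong: has_bochner_integral_cong)
  show ?thesis
    using has_bochner_integral_integral_eq[OF lhs] has_bochner_integral_integral_eq[OF rhs] by simp
qed

lemma integrable_r: "n \<ge> 1 \<Longrightarrow> integrable M (r n)"
  using r_01 by (intro integrable_bounded[where B = 1] r_measurable) force+

lemma integrable_pbar: "integrable M (pbar r m)"
  using pbar_nonneg_le_1 by (intro integrable_bounded[where B = 1]) force+

lemma integral_r1: "(\<integral>\<omega>. r 1 \<omega> \<partial>M) = p"
proof -
  have "(\<integral>\<omega>. r 1 \<omega> \<partial>M) = (\<integral>\<omega>. indicator {\<omega> \<in> space M. r 1 \<omega> = 1} \<omega> \<partial>M)"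
    using r_01[of 1] by (intro Bochner_Integration.integral_cong) (auto simp: indicator_def)
  then show ?thesis
    using prob_r1 sets_r_eq[of 1] by simp
qed

lemma integral_r: "n \<ge> 1 \<Longrightarrow> (\<integral>\<omega>. r n \<omega> \<partial>M) = p"
proof (induction n rule: less_induct)
  case (less n)
  show ?case
  proof (cases "n = 1")
    case True
    then show ?thesis using integral_r1 by simp
  next
    case False
    then obtain m where n: "n = Suc m" and m: "m \<ge> 1"
      using less.prems by (cases n) auto
    have "(\<integral>\<omega>. pbar r m \<omega> \<partial>M) = (\<Sum>i=1..m. \<integral>\<omega>. r i \<omega> \<partial>M) / real m"
      unfolding pbar_def using integrable_r by simp
    also have "\<dots> = p"
      using m less.IH n by simp
    finally have "(\<integral>\<omega>. pbar r m \<omega> - p \<partial>M) = 0"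
      using integrable_pbar by (simp add: prob_space)
    moreover have "(\<integral>\<omega>. r n \<omega> - p \<partial>M) = (1 - lam n) * (\<integral>\<omega>. pbar r m \<omega> - p \<partial>M)"
      using integral_mult_centered_step[OF m, of "\<lambda>_. 1"] n by simp
    ultimately show ?thesis
      using integrable_r[OF less.prems] by (simp add: prob_space)
  qed
qed

lemma integral_r_centered_square: "n \<ge> 1 \<Longrightarrow> (\<integral>\<omega>. (r n \<omega> - p)^2 \<partial>M) = p * (1 - p)"
proof -
  assume n: "n \<ge> 1"
  have "(\<integral>\<omega>. (r n \<omega> - p)^2 \<partial>M) = (\<integral>\<omega>. (1 - 2 * p) * r n \<omega> + p^2 \<partial>M)"
    using r_01[OF n] by (intro Bochner_Integration.integral_cong) (auto simp: power2_eq_square algebra_simps)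
  also have "\<dots> = p * (1 - p)"
    using integrable_r[OF n] integral_r[OF n] by (simp add: prob_space power2_eq_square algebra_simps)
  finally show ?thesis .
qed

lemma integral_pbar_centered_square_Suc:
  assumes m: "m \<ge> 1"
  shows "real (Suc m)^2 * (\<integral>\<omega>. (pbar r (Suc m) \<omega> - p)^2 \<partial>M)
       = (real m^2 + 2 * real m * (1 - lam (Suc m))) * (\<integral>\<omega>. (pbar r m \<omega> - p)^2 \<partial>M) + p * (1 - p)"
proof -
  define D where "D \<omega> = pbar r m \<omega> - p" for \<omega>
  define X where "X \<omega> = r (Suc m) \<omega> - p" for \<omega>
  have [measurable]: "D \<in> borel_measurable M" "X \<in> borel_measurable M"
    unfolding D_def X_def using r_measurable[of "Suc m"] by measurable
  have D_X_bounded: "\<bar>D \<omega>\<bar> \<le> 1 \<and> \<bar>X \<omega>\<bar> \<le> 1" if "\<omega> \<in> space M" for \<omega>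
    using pbar_nonneg_le_1[OF that, of m] r_01[OF _ that, of "Suc m"] p_nonneg p_le_1
    by (auto simp: D_def X_def)
  have integrable: "integrable M (\<lambda>\<omega>. (D \<omega>)^2)" "integrable M (\<lambda>\<omega>. D \<omega> * X \<omega>)"
      "integrable M (\<lambda>\<omega>. (X \<omega>)^2)"
    by (intro integrable_bounded[where B = 1]; force dest: D_X_bounded simp: abs_mult abs_square_le_1
          intro: mult_le_one)+
  have "real (Suc m) * (pbar r (Suc m) \<omega> - p) = real m * D \<omega> + X \<omega>" for \<omega>
    unfolding pbar_Suc D_def X_def by (simp add: field_simps)
  then have pointwise: "real (Suc m)^2 * (pbar r (Suc m) \<omega> - p)^2
      = (real m)^2 * (D \<omega>)^2 + 2 * real m * (D \<omega> * X \<omega>) + (X \<omega>)^2" for \<omega>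
    unfolding power_mult_distrib[symmetric] by (simp add: power2_sum power_mult_distrib)
  have "real (Suc m)^2 * (\<integral>\<omega>. (pbar r (Suc m) \<omega> - p)^2 \<partial>M)
      = (\<integral>\<omega>. (real m)^2 * (D \<omega>)^2 + 2 * real m * (D \<omega> * X \<omega>) + (X \<omega>)^2 \<partial>M)"
    unfolding integral_mult_right_zero[symmetric] pointwise ..
  also have "\<dots> = (real m)^2 * (\<integral>\<omega>. (D \<omega>)^2 \<partial>M) + 2 * real m * (\<integral>\<omega>. D \<omega> * X \<omega> \<partial>M)
        + (\<integral>\<omega>. (X \<omega>)^2 \<partial>M)"
    using integrable by simp
  finally have "real (Suc m)^2 * (\<integral>\<omega>. (pbar r (Suc m) \<omega> - p)^2 \<partial>M)
      = (real m)^2 * (\<integral>\<omega>. (D \<omega>)^2 \<partial>M) + 2 * real m * (\<integral>\<omega>. D \<omega> * X \<omega> \<partial>M)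
        + (\<integral>\<omega>. (X \<omega>)^2 \<partial>M)" .
  moreover have "(\<integral>\<omega>. D \<omega> * X \<omega> \<partial>M) = (1 - lam (Suc m)) * (\<integral>\<omega>. (D \<omega>)^2 \<partial>M)"
    using integral_mult_centered_step[OF m, of "\<lambda>x. x - p"] by (simp add: D_def X_def power2_eq_square)
  moreover have "(\<integral>\<omega>. (X \<omega>)^2 \<partial>M) = p * (1 - p)"
    unfolding X_def by (rule integral_r_centered_square) simp
  ultimately show ?thesis
    unfolding D_def[symmetric] by (simp add: ring_distribs)
qed

lemma integral_pbar_centered_square_closed_form:
  assumes "n \<ge> 1"
  shows "(\<integral>\<omega>. (pbar r n \<omega> - p)^2 \<partial>M)
       = (real n + 1) / real n * (p * (1 - p) * discounted_sum (\<lambda>j. 1 - 2 * lam j / real (j + 1)) (Suc n))"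
  using assms
proof (induction n rule: dec_induct)
  case base
  have "pbar r 1 = r 1"
    by (simp add: pbar_def fun_eq_iff)
  then show ?case
    using integral_r_centered_square[of 1] by (simp add: discounted_sum_def)
next
  case (step n)
  let ?c = "\<lambda>j. 1 - 2 * lam j / real (j + 1)"
  have field_identity: "((x^2 + 2 * x * (1 - l)) * ((x + 1) / x * (q * S)) + q) / (x + 1)^2
      = (x + 2) / (x + 1) * (q * ((1 - 2 * l / (x + 2)) * S + 1 / ((x + 1) * (x + 2))))"
    if "x > 0" for x l q S :: real
  proof -
    have "x + 1 > 0" "x + 2 > 0" using that by auto
    then show ?thesis
      using that by (simp add: divide_simps) (simp add: algebra_simps power2_eq_square)
  qed
  have "(\<integral>\<omega>. (pbar r (Suc n) \<omega> - p)^2 \<partial>M)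
      = ((real n^2 + 2 * real n * (1 - lam (Suc n))) * (\<integral>\<omega>. (pbar r n \<omega> - p)^2 \<partial>M) + p * (1 - p))
        / (real n + 1)^2"
    using integral_pbar_centered_square_Suc[OF step.hyps(1)] by (simp add: field_simps)
  also have "\<dots> = (real n + 2) / (real n + 1) * (p * (1 - p) *
      (?c (Suc n) * discounted_sum ?c (Suc n) + 1 / ((real n + 1) * (real n + 2))))"
    unfolding step.IH using step.hyps(1) by (subst field_identity) simp_all
  finally show ?case
    using step.hyps(1) by (simp add: discounted_sum_Suc add_ac)
qed

end

lemma discount_factor_bounds:
  fixes lam :: "nat \<Rightarrow> real"
  assumes "lam 1 = 1" and "\<And>n. n > 1 \<Longrightarrow> 0 \<le> lam n \<and> lam n \<le> lam (n - 1)" and "j \<ge> 1"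
  shows "0 \<le> 1 - 2 * lam j / real (j + 1) \<and> 1 - 2 * lam j / real (j + 1) \<le> 1"
proof -
  have "0 \<le> lam j \<and> lam j \<le> 1"
    using assms(3)
  proof (induction j rule: dec_induct)
    case base
    then show ?case using assms(1) by simp
  next
    case (step n)
    then show ?case using assms(2)[of "Suc n"] by auto
  qed
  moreover have "1 \<le> real j"
    using assms(3) by simp
  ultimately show ?thesis
    by (simp add: field_simps)
qed

theorem theoremA5:
  fixes M :: "'a measure" and r :: "nat \<Rightarrow> 'a \<Rightarrow> real"
    and lam :: "nat \<Rightarrow> real" and p :: real
  assumes "prob_space M"
    and "0 < p" and "p < 1"
    and "lam 1 = 1"
    and "\<And>n. n > 1 \<Longrightarrow> 0 \<le> lam n \<and> lam n \<le> lam (n - 1)"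
    and "\<And>n. n \<ge> 1 \<Longrightarrow> r n \<in> borel_measurable M"
    and "\<And>n \<omega>. n \<ge> 1 \<Longrightarrow> \<omega> \<in> space M \<Longrightarrow> r n \<omega> \<in> {0, 1}"
    and "measure M {\<omega> \<in> space M. r 1 \<omega> = 1} = p"
    and "\<And>n a. n \<ge> 2 \<Longrightarrow> (\<forall>i\<in>{1..n-1}. a i \<in> {0, 1}) \<Longrightarrow>
           measure M {\<omega> \<in> space M. (\<forall>i\<in>{1..n-1}. r i \<omega> = a i) \<and> r n \<omega> = 1}
           = (lam n * p + (1 - lam n) * ((\<Sum>i=1..n-1. a i) / real (n - 1)))
             * measure M {\<omega> \<in> space M. \<forall>i\<in>{1..n-1}. r i \<omega> = a i}"
  shows "\<exists>L. ((\<lambda>n. integral\<^sup>L M (\<lambda>\<omega>. (pbar r n \<omega> - p)^2)) \<longlonglongrightarrow> L)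
            \<and> ((\<lambda>n. p * (1 - p) * (\<Sum>i=1..n-1. 1 / (real i * real (i + 1))
                  * (\<Prod>j=i+1..n-1. 1 - 2 * lam j / real (j + 1)))) \<longlonglongrightarrow> L)"
proof -
  interpret reinforced_bernoulli M r lam p
    by (rule reinforced_bernoulli.intro[OF assms(1)], unfold_locales) (fact assms)+
  define c where "c = (\<lambda>j. 1 - 2 * lam j / real (j + 1))"
  have "0 \<le> c j \<and> c j \<le> 1" if "j \<ge> 1" for j
    unfolding c_def using discount_factor_bounds[OF assms(4,5) that] .
  then obtain L where L: "discounted_sum c \<longlonglongrightarrow> L"
    using convergent_discounted_sum convergent_LIMSEQ_iff by blast
  then have "(\<lambda>n. real (Suc n) / real n * (p * (1 - p) * discounted_sum c (Suc n)))
      \<longlonglongrightarrow> 1 * (p * (1 - p) * L)"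
    by (intro tendsto_mult LIMSEQ_Suc_n_over_n tendsto_mult_left LIMSEQ_Suc[OF L])
  moreover have "\<forall>\<^sub>F n in sequentially. real (Suc n) / real n * (p * (1 - p) * discounted_sum c (Suc n))
      = (\<integral>\<omega>. (pbar r n \<omega> - p)^2 \<partial>M)"
    using eventually_ge_at_top[of 1]
    by eventually_elim (simp add: integral_pbar_centered_square_closed_form c_def)
  ultimately have "(\<lambda>n. \<integral>\<omega>. (pbar r n \<omega> - p)^2 \<partial>M) \<longlonglongrightarrow> p * (1 - p) * L"
    by (simp add: tendsto_cong)
  moreover have "(\<lambda>n. p * (1 - p) * discounted_sum c n) \<longlonglongrightarrow> p * (1 - p) * L"
    using L by (rule tendsto_mult_left)
  ultimately show ?thesis
    unfolding discounted_sum_def c_def by (intro exI conjI)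
qed

end
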